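(* Let $\mathbb{T}^1$ be the one-dimensional connected compact torus (circle), equipped with a bi-invariant metric $d$ and Haar probability measure $\mu$. Let $\phi$ be a positive function on $\mathbb{T}^1$ and $\bar\phi=\int_{\mathbb{T}^1}\phi\circ g\,d\mu(g)$ its $\mathbb{T}^1$-average, regarded as a constant function. Assume $e^{-\kappa}\bar\phi\le\phi$. Then $$d_L(\phi\cdot\mu,\bar\phi\cdot\mu)\le\kappa\,\mathrm{diam}(\mathbb{T}^1).$$
   Context: The Lévy–Prokhorov distance between measures $\mu_1,\mu_2$ on a metric space is $d_L(\mu_1,\mu_2)=\inf\{\varepsilon>0:\ \mu_2(A_\varepsilon)\ge\mu_1(A)\ \text{for all subsets } A\}$, with $A_\varepsilon$ the $\varepsilon$-neighborhood of $A$. *)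

theory Defs
  imports "HOL-Analysis.Analysis"
begin

text \<open>Model of the circle T^1 = R/Z as the fundamental domain [0,1), with group
operation addition mod 1.\<close>

definition T1 :: "real set" where
  "T1 = {0..<1}"

definition haar_T1 :: "real measure" where
  "haar_T1 = restrict_space lborel T1"

text \<open>Bi-invariant (Riemannian) metric on T^1: arc-length metric of a circle of
total length L > 0.\<close>
definition T1_dist :: "real \<Rightarrow> real \<Rightarrow> real \<Rightarrow> real" where
  "T1_dist L x y = L * min \<bar>x - y\<bar> (1 - \<bar>x - y\<bar>)"

definition T1_diam :: "real \<Rightarrow> real" where
  "T1_diam L = Sup {T1_dist L x y | x y. x \<in> T1 \<and> y \<in> T1}"

definition LP_dist :: "('a \<Rightarrow> 'a \<Rightarrow> real) \<Rightarrow> 'a measure \<Rightarrow> 'a measure \<Rightarrow> real" where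
  "LP_dist d M1 M2 = Inf {\<epsilon>. \<epsilon> > 0 \<and>
     (\<forall>A \<in> sets M1. emeasure M2 {x \<in> space M2. \<exists>a\<in>A. d x a < \<epsilon>} \<ge> emeasure M1 A)}"

end

theory Submission
  imports Defs "HOL-Probability.Probability_Measure"
begin

text \<open>Let \<open>\<epsilon> > \<kappa> L / 2 = \<kappa> diam\<close> and let \<open>U\<close> be the \<open>\<epsilon>\<close>-neighbourhood of a nonempty
Borel set \<open>A\<close>. Either \<open>U\<close> is the whole circle, or, cutting the circle open at a point
outside \<open>U\<close>, the lifted copy of \<open>A\<close> lies strictly inside the cut interval and \<open>U\<close> contains
the two arcs of length \<open>\<epsilon> / L\<close> flanking it; so \<open>\<mu> U \<ge> min 1 (\<mu> A + 2 \<epsilon> / L)\<close> and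
\<open>2 \<epsilon> / L > \<kappa>\<close>. On the other hand \<open>\<phi> \<ge> exp (-\<kappa>) c\<close> on the complement of \<open>A\<close>, where
\<open>c\<close> is the average of \<open>\<phi>\<close>, gives
\<open>\<integral>\<^sub>A \<phi> \<le> c (1 - exp (-\<kappa>) (1 - \<mu> A)) \<le> c min 1 (\<mu> A + \<kappa>) \<le> c \<mu> U\<close>.\<close>

lemma emeasure_lborel_translate:
  fixes c :: "'a::euclidean_space"
  assumes "S \<in> sets borel"
  shows "emeasure lborel ((\<lambda>x. c + x) -` S) = emeasure lborel S"
proof -
  have "emeasure lborel S = emeasure (distr lborel borel ((+) c)) S"
    by (simp add: lborel_distr_plus)
  also have "\<dots> = emeasure lborel ((\<lambda>x. c + x) -` S)"
    using assms by (simp add: emeasure_distr)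
  finally show ?thesis ..
qed

lemma emeasure_thickening_ge:
  fixes B :: "real set"
  assumes "B \<in> sets borel" "B \<noteq> {}" "bounded B" "r > 0"
  shows "emeasure lborel B + ennreal (2 * r) \<le> emeasure lborel (\<Union>b\<in>B. ball b r)"
proof -
  define m where "m = Inf B"
  define M where "M = Sup B"
  have bdd: "bdd_below B" "bdd_above B"
    using \<open>bounded B\<close> by (auto simp: bounded_imp_bdd_below bounded_imp_bdd_above)
  have B_between: "m \<le> b" "b \<le> M" if "b \<in> B" for b
    using that bdd by (auto simp: m_def M_def intro: cInf_lower cSup_upper)
  have "m \<le> M"
    using B_between \<open>B \<noteq> {}\<close> by fastforce
  have left: "{m - r<..<m} \<subseteq> (\<Union>b\<in>B. ball b r)"
  proof
    fix y assume y: "y \<in> {m - r<..<m}"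
    then obtain b where "b \<in> B" "b < y + r"
      using cInf_lessD[of B "y + r"] \<open>B \<noteq> {}\<close> by (auto simp: m_def)
    with y B_between show "y \<in> (\<Union>b\<in>B. ball b r)"
      by (fastforce simp: dist_real_def)
  qed
  have right: "{M<..<M + r} \<subseteq> (\<Union>b\<in>B. ball b r)"
  proof
    fix y assume y: "y \<in> {M<..<M + r}"
    then obtain b where "b \<in> B" "y - r < b"
      using less_cSupD[of B "y - r"] \<open>B \<noteq> {}\<close> by (auto simp: M_def)
    with y B_between show "y \<in> (\<Union>b\<in>B. ball b r)"
      by (fastforce simp: dist_real_def)
  qed
  have "B \<subseteq> (\<Union>b\<in>B. ball b r)"
    using \<open>r > 0\<close> by auto
  have "emeasure lborel B + ennreal (2 * r)
      = emeasure lborel B + emeasure lborel {m - r<..<m} + emeasure lborel {M<..<M + r}"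
    using \<open>r > 0\<close> by (simp add: ennreal_plus[symmetric] del: ennreal_plus)
  also have "\<dots> = emeasure lborel (B \<union> {m - r<..<m}) + emeasure lborel {M<..<M + r}"
    using assms B_between by (subst plus_emeasure) (auto simp: not_less[symmetric])
  also have "\<dots> = emeasure lborel (B \<union> {m - r<..<m} \<union> {M<..<M + r})"
    using assms B_between \<open>m \<le> M\<close> by (subst plus_emeasure) (fastforce simp: not_less[symmetric])+
  also have "\<dots> \<le> emeasure lborel (\<Union>b\<in>B. ball b r)"
    using left right \<open>B \<subseteq> _\<close> by (intro emeasure_mono) (auto intro: borel_open)
  finally show ?thesis .
qed

definition wrap :: "real \<Rightarrow> real" where
  "wrap y = (if y < 1 then y else y - 1)"

definition unwrap_at :: "real \<Rightarrow> real set \<Rightarrow> real set" where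
  "unwrap_at u X = {y \<in> {u..<u + 1}. wrap y \<in> X}"

lemma wrap_in_T1: "u \<in> T1 \<Longrightarrow> y \<in> {u..<u + 1} \<Longrightarrow> wrap y \<in> T1"
  by (auto simp: wrap_def T1_def)

lemma T1_dist_wrap_le:
  assumes "u \<in> T1" "y \<in> {u..u + 1}" "z \<in> {u..u + 1}"
  shows "T1_dist 1 (wrap y) (wrap z) \<le> \<bar>y - z\<bar>"
  using assms by (auto simp: T1_dist_def wrap_def T1_def abs_if min_def)

lemma borel_measurable_wrap[measurable]: "wrap \<in> borel_measurable borel"
  unfolding wrap_def by measurable

lemma sets_unwrap_at: "X \<in> sets borel \<Longrightarrow> unwrap_at u X \<in> sets borel"
  using measurable_sets_borel[OF borel_measurable_wrap]
  by (simp add: unwrap_at_def Collect_conj_eq vimage_def)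

lemma emeasure_unwrap_at:
  assumes "u \<in> T1" "X \<subseteq> T1" "X \<in> sets borel"
  shows "emeasure lborel (unwrap_at u X) = emeasure lborel X"
proof -
  have split: "unwrap_at u X = (X \<inter> {u..}) \<union> ((\<lambda>x. -1 + x) -` (X \<inter> {..<u}))"
    using assms by (auto simp: unwrap_at_def wrap_def T1_def)
  have "emeasure lborel (unwrap_at u X)
      = emeasure lborel (X \<inter> {u..}) + emeasure lborel ((\<lambda>x. -1 + x) -` (X \<inter> {..<u}))"
    unfolding split
  proof (rule plus_emeasure[symmetric])
    show "X \<inter> {u..} \<inter> (\<lambda>x. -1 + x) -` (X \<inter> {..<u}) = {}"
    proof (safe)
      fix x assume "x \<in> X" "-1 + x \<in> X"
      then have "x \<in> T1" "-1 + x \<in> T1"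
        using assms(2) by blast+
      then show "x \<in> {}"
        by (simp add: T1_def)
    qed
  qed (use assms(3) in auto)
  also have "\<dots> = emeasure lborel (X \<inter> {u..}) + emeasure lborel (X \<inter> {..<u})"
    using assms(3) by (subst emeasure_lborel_translate) auto
  also have "\<dots> = emeasure lborel X"
    using assms(3) by (subst plus_emeasure) (auto intro: arg_cong[where f = "emeasure lborel"])
  finally show ?thesis .
qed

lemma sets_T1_neighbourhood: "{x \<in> T1. \<exists>a\<in>A. T1_dist L x a < \<epsilon>} \<in> sets borel"
proof -
  have "open {x. T1_dist L x a < \<epsilon>}" for a
    unfolding T1_dist_def by (intro open_Collect_less continuous_intros)
  then have "open (\<Union>a\<in>A. {x. T1_dist L x a < \<epsilon>})"
    by auto
  moreover have "{x \<in> T1. \<exists>a\<in>A. T1_dist L x a < \<epsilon>} = T1 \<inter> (\<Union>a\<in>A. {x. T1_dist L x a < \<epsilon>})"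
    by auto
  ultimately show ?thesis
    by (auto simp: T1_def intro: borel_open)
qed

lemma emeasure_T1_neighbourhood_ge:
  assumes A: "A \<subseteq> T1" "A \<in> sets borel" "A \<noteq> {}" and "r > 0"
    and u: "u \<in> T1" "\<forall>a\<in>A. r \<le> T1_dist 1 u a"
  shows "emeasure lborel A + ennreal (2 * r)
    \<le> emeasure lborel {x \<in> T1. \<exists>a\<in>A. T1_dist 1 x a < r}"
    (is "_ \<le> emeasure lborel ?U")
proof -
  define B where "B = unwrap_at u A"
  have wrap_u: "wrap u = u" "wrap (u + 1) = u"
    using u by (auto simp: wrap_def T1_def)
  have B_inside: "u + r \<le> b \<and> b + r \<le> u + 1" if "b \<in> B" for b
  proof -
    have b: "b \<in> {u..<u + 1}" "wrap b \<in> A"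
      using that by (auto simp: B_def unwrap_at_def)
    have "r \<le> T1_dist 1 (wrap u) (wrap b)" "r \<le> T1_dist 1 (wrap (u + 1)) (wrap b)"
      using u b wrap_u by auto
    moreover have "T1_dist 1 (wrap u) (wrap b) \<le> \<bar>u - b\<bar>"
      "T1_dist 1 (wrap (u + 1)) (wrap b) \<le> \<bar>u + 1 - b\<bar>"
      using b T1_dist_wrap_le[OF u(1), of u b] T1_dist_wrap_le[OF u(1), of "u + 1" b] by auto
    ultimately show ?thesis
      using b by auto
  qed
  have thickening_sub: "(\<Union>b\<in>B. ball b r) \<subseteq> unwrap_at u ?U"
  proof safe
    fix b y assume "b \<in> B" "y \<in> ball b r"
    then have "y \<in> {u..<u + 1}" "wrap b \<in> A" "b \<in> {u..u + 1}" "\<bar>y - b\<bar> < r"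
      using B_inside[of b] by (auto simp: B_def unwrap_at_def dist_real_def)
    moreover from this have "T1_dist 1 (wrap y) (wrap b) < r"
      using T1_dist_wrap_le[OF u(1), of y b] by auto
    ultimately show "y \<in> unwrap_at u ?U"
      using wrap_in_T1[OF u(1)] by (auto simp: unwrap_at_def)
  qed
  have "B \<noteq> {}"
  proof -
    obtain a where "a \<in> A"
      using A(3) by blast
    then have "(if u \<le> a then a else a + 1) \<in> B"
      using A(1) u(1) by (auto simp: B_def unwrap_at_def wrap_def T1_def)
    then show ?thesis
      by blast
  qed
  moreover have "bounded B"
    by (rule bounded_subset[of "{u..u + 1}"]) (auto simp: B_def unwrap_at_def)
  ultimately have "emeasure lborel B + ennreal (2 * r) \<le> emeasure lborel (\<Union>b\<in>B. ball b r)"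
    using emeasure_thickening_ge sets_unwrap_at[OF A(2)] \<open>r > 0\<close> by (simp add: B_def)
  also have "\<dots> \<le> emeasure lborel (unwrap_at u ?U)"
    using thickening_sub by (intro emeasure_mono) (simp_all add: sets_unwrap_at sets_T1_neighbourhood)
  also have "\<dots> = emeasure lborel ?U"
    using u(1) sets_T1_neighbourhood by (intro emeasure_unwrap_at) auto
  finally show ?thesis
    using emeasure_unwrap_at[OF u(1) A(1,2)] by (simp add: B_def)
qed

lemma space_haar_T1: "space haar_T1 = T1"
  by (simp add: haar_T1_def space_restrict_space)

lemma sets_haar_T1_iff: "A \<in> sets haar_T1 \<longleftrightarrow> A \<subseteq> T1 \<and> A \<in> sets borel"
  by (auto simp: haar_T1_def T1_def sets_restrict_space_iff)

lemma emeasure_haar_T1: "A \<in> sets haar_T1 \<Longrightarrow> emeasure haar_T1 A = emeasure lborel A"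
  by (auto simp: haar_T1_def T1_def emeasure_restrict_space sets_restrict_space_iff)

lemma prob_space_haar_T1: "prob_space haar_T1"
  unfolding haar_T1_def T1_def by (rule prob_space_restrict_space) auto

lemma measure_haar_T1_neighbourhood_ge:
  assumes "L > 0" "\<epsilon> > 0" "A \<in> sets haar_T1" "A \<noteq> {}"
  shows "min 1 (measure haar_T1 A + 2 * \<epsilon> / L)
    \<le> measure haar_T1 {x \<in> T1. \<exists>a\<in>A. T1_dist L x a < \<epsilon>}"
    (is "_ \<le> measure haar_T1 ?U")
proof -
  interpret prob_space haar_T1
    by (rule prob_space_haar_T1)
  have U_unit: "?U = {x \<in> T1. \<exists>a\<in>A. T1_dist 1 x a < \<epsilon> / L}"
    using \<open>L > 0\<close> by (simp add: T1_dist_def field_simps mult.commute)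
  have U_sets: "?U \<in> sets haar_T1"
    using sets_T1_neighbourhood by (simp add: sets_haar_T1_iff)
  show ?thesis
  proof (cases "?U = T1")
    case True
    then show ?thesis
      using prob_space by (simp add: space_haar_T1)
  next
    case False
    then obtain u where "u \<in> T1" "u \<notin> ?U"
      by auto
    then have "\<forall>a\<in>A. \<epsilon> / L \<le> T1_dist 1 u a"
      unfolding U_unit by auto
    then have "emeasure lborel A + ennreal (2 * (\<epsilon> / L)) \<le> emeasure lborel ?U"
      unfolding U_unit using assms \<open>u \<in> T1\<close>
      by (intro emeasure_T1_neighbourhood_ge) (auto simp: sets_haar_T1_iff)
    then have "ennreal (measure haar_T1 A + 2 * \<epsilon> / L) \<le> ennreal (measure haar_T1 ?U)"
      using assms U_sets
      by (simp add: emeasure_haar_T1[symmetric] emeasure_eq_measure ennreal_plus[symmetric] del: ennreal_plus)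
    then show ?thesis
      by (simp add: ennreal_le_iff)
  qed
qed

lemma T1_diam_eq:
  assumes "0 \<le> L"
  shows "T1_diam L = L / 2"
  unfolding T1_diam_def
proof (rule cSup_eq_maximum)
  show "L / 2 \<in> {T1_dist L x y |x y. x \<in> T1 \<and> y \<in> T1}"
    by (rule CollectI, rule exI[of _ 0], rule exI[of _ "1/2"]) (simp add: T1_dist_def T1_def)
  fix z assume "z \<in> {T1_dist L x y |x y. x \<in> T1 \<and> y \<in> T1}"
  then obtain x y where "z = L * min \<bar>x - y\<bar> (1 - \<bar>x - y\<bar>)"
    by (auto simp: T1_dist_def)
  also have "\<dots> \<le> L * (1 / 2)"
    using assms by (intro mult_left_mono) (auto simp: min_def)
  finally show "z \<le> L / 2"
    by simp
qed

lemma LP_dist_le: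
  assumes "0 \<le> \<delta>"
    and "\<And>\<epsilon> A. \<delta> < \<epsilon> \<Longrightarrow> A \<in> sets M1
      \<Longrightarrow> emeasure M1 A \<le> emeasure M2 {x \<in> space M2. \<exists>a\<in>A. d x a < \<epsilon>}"
  shows "LP_dist d M1 M2 \<le> \<delta>"
  unfolding LP_dist_def
proof (rule field_le_epsilon)
  fix e :: real assume "e > 0"
  then show "Inf {\<epsilon>. 0 < \<epsilon> \<and> (\<forall>A\<in>sets M1. emeasure M1 A \<le> emeasure M2 {x \<in> space M2. \<exists>a\<in>A. d x a < \<epsilon>})}
    \<le> \<delta> + e"
    using assms by (intro cInf_lower bdd_belowI[of _ 0]) auto
qed

lemma one_minus_exp_mult_le:
  fixes \<kappa> a :: real
  assumes "0 \<le> \<kappa>" "0 \<le> a" "a \<le> 1"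
  shows "1 - exp (- \<kappa>) * (1 - a) \<le> min 1 (a + \<kappa>)"
proof -
  have "1 - exp (- \<kappa>) * (1 - a) = a + (1 - a) * (1 - exp (- \<kappa>))"
    by (simp add: algebra_simps)
  also have "(1 - a) * (1 - exp (- \<kappa>)) \<le> 1 * \<kappa>"
    using assms exp_ge_add_one_self[of "- \<kappa>"] by (intro mult_mono) auto
  finally show ?thesis
    using assms by simp
qed

lemma emeasure_density_integrable:
  fixes f :: "'a \<Rightarrow> real"
  assumes "integrable M f" "\<And>x. x \<in> space M \<Longrightarrow> 0 \<le> f x" "A \<in> sets M"
  shows "emeasure (density M (\<lambda>x. ennreal (f x))) A = ennreal (\<integral>x. f x * indicator A x \<partial>M)"
proof -
  have "emeasure (density M (\<lambda>x. ennreal (f x))) A = (\<integral>\<^sup>+x. ennreal (f x * indicator A x) \<partial>M)"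
    using assms by (simp add: emeasure_density nn_integral_set_ennreal)
  also have "\<dots> = ennreal (\<integral>x. f x * indicator A x \<partial>M)"
    using assms by (intro nn_integral_eq_integral integrable_real_mult_indicator AE_I2) auto
  finally show ?thesis .
qed

lemma (in prob_space) integral_indicator_le_of_lower_bound:
  fixes f :: "'a \<Rightarrow> real"
  assumes "integrable M f" "\<And>x. x \<in> space M \<Longrightarrow> b \<le> f x" "A \<in> events"
  shows "(\<integral>x. f x * indicator A x \<partial>M) \<le> expectation f - b * (1 - prob A)"
proof -
  define Ac where "Ac = space M - A"
  have "Ac \<in> events"
    using assms(3) by (simp add: Ac_def)
  have "expectation f = (\<integral>x. f x * indicator A x + f x * indicator Ac x \<partial>M)"
    using sets.sets_into_space[OF assms(3)]
    by (intro Bochner_Integration.integral_cong) (auto simp: Ac_def indicator_def)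
  also have "\<dots> = (\<integral>x. f x * indicator A x \<partial>M) + (\<integral>x. f x * indicator Ac x \<partial>M)"
    using assms \<open>Ac \<in> events\<close> by (intro Bochner_Integration.integral_add integrable_real_mult_indicator)
  finally have "expectation f = (\<integral>x. f x * indicator A x \<partial>M) + (\<integral>x. f x * indicator Ac x \<partial>M)" .
  moreover have "b * prob Ac \<le> (\<integral>x. f x * indicator Ac x \<partial>M)"
  proof -
    have "b * prob Ac = (\<integral>x. b * indicator Ac x \<partial>M)"
      using \<open>Ac \<in> events\<close> by simp
    also have "\<dots> \<le> (\<integral>x. f x * indicator Ac x \<partial>M)"
      using assms \<open>Ac \<in> events\<close>
      by (intro integral_mono integrable_real_mult_indicator) (auto simp: indicator_def)
    finally show ?thesis .
  qed
  moreover have "prob Ac = 1 - prob A"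
    using prob_compl[OF assms(3)] by (simp add: Ac_def)
  ultimately show ?thesis
    by simp
qed

lemma integral_indicator_le_neighbourhood:
  fixes \<phi> :: "real \<Rightarrow> real"
  assumes "L > 0" "integrable haar_T1 \<phi>" "c = (\<integral>x. \<phi> x \<partial>haar_T1)" "0 \<le> c"
    and lower: "\<And>x. x \<in> T1 \<Longrightarrow> exp (- \<kappa>) * c \<le> \<phi> x"
    and "0 \<le> \<kappa>" "\<kappa> * L / 2 < \<epsilon>" "A \<in> sets haar_T1"
  shows "(\<integral>x. \<phi> x * indicator A x \<partial>haar_T1)
    \<le> c * measure haar_T1 {x \<in> T1. \<exists>a\<in>A. T1_dist L x a < \<epsilon>}"
proof (cases "A = {}")
  case True
  then show ?thesis
    by simp
next
  case False
  interpret prob_space haar_T1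
    by (rule prob_space_haar_T1)
  have "\<kappa> < 2 * \<epsilon> / L"
    using assms by (simp add: field_simps)
  have "0 < \<epsilon>"
    using assms mult_nonneg_nonneg[of \<kappa> L] by linarith
  have "(\<integral>x. \<phi> x * indicator A x \<partial>haar_T1) \<le> c - exp (- \<kappa>) * c * (1 - prob A)"
    using integral_indicator_le_of_lower_bound[of \<phi> "exp (- \<kappa>) * c" A] assms
    by (simp add: space_haar_T1)
  also have "\<dots> = c * (1 - exp (- \<kappa>) * (1 - prob A))"
    by (simp add: algebra_simps)
  also have "\<dots> \<le> c * min 1 (prob A + \<kappa>)"
    using assms by (intro mult_left_mono one_minus_exp_mult_le) auto
  also have "\<dots> \<le> c * min 1 (prob A + 2 * \<epsilon> / L)"
    using assms \<open>\<kappa> < 2 * \<epsilon> / L\<close> by (intro mult_left_mono) auto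
  also have "\<dots> \<le> c * prob {x \<in> T1. \<exists>a\<in>A. T1_dist L x a < \<epsilon>}"
    using assms False \<open>0 < \<epsilon>\<close> by (intro mult_left_mono measure_haar_T1_neighbourhood_ge) auto
  finally show ?thesis .
qed

lemma emeasure_density_le_neighbourhood:
  fixes \<phi> :: "real \<Rightarrow> real"
  assumes "L > 0" "integrable haar_T1 \<phi>" "\<And>x. x \<in> T1 \<Longrightarrow> 0 \<le> \<phi> x"
    and "c = (\<integral>x. \<phi> x \<partial>haar_T1)" "\<And>x. x \<in> T1 \<Longrightarrow> exp (- \<kappa>) * c \<le> \<phi> x"
    and "0 \<le> \<kappa>" "\<kappa> * L / 2 < \<epsilon>" "A \<in> sets haar_T1"
  shows "emeasure (density haar_T1 (\<lambda>x. ennreal (\<phi> x))) A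
    \<le> emeasure (density haar_T1 (\<lambda>x. ennreal c)) {x \<in> T1. \<exists>a\<in>A. T1_dist L x a < \<epsilon>}"
    (is "_ \<le> emeasure _ ?U")
proof -
  interpret prob_space haar_T1
    by (rule prob_space_haar_T1)
  have "0 \<le> c"
    unfolding assms(4) using assms(3) by (intro Bochner_Integration.integral_nonneg) (simp add: space_haar_T1)
  have U_sets: "?U \<in> sets haar_T1"
    using sets_T1_neighbourhood by (simp add: sets_haar_T1_iff)
  have "emeasure (density haar_T1 (\<lambda>x. ennreal (\<phi> x))) A
      = ennreal (\<integral>x. \<phi> x * indicator A x \<partial>haar_T1)"
    using assms by (intro emeasure_density_integrable) (auto simp: space_haar_T1)
  also have "\<dots> \<le> ennreal (c * prob ?U)"
    using assms \<open>0 \<le> c\<close> by (intro ennreal_leI integral_indicator_le_neighbourhood)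
  also have "\<dots> = emeasure (density haar_T1 (\<lambda>x. ennreal c)) ?U"
    using \<open>0 \<le> c\<close> U_sets by (subst emeasure_density_integrable) auto
  finally show ?thesis .
qed

theorem lemma18p0p7:
  fixes L \<kappa> :: real and \<phi> :: "real \<Rightarrow> real"
  assumes "L > 0"
    and "\<phi> \<in> borel_measurable haar_T1"
    and "integrable haar_T1 \<phi>"
    and "\<forall>x\<in>T1. \<phi> x > 0"
    and "\<forall>x\<in>T1. exp (- \<kappa>) * (\<integral>g. \<phi> g \<partial>haar_T1) \<le> \<phi> x"
  shows "LP_dist (T1_dist L)
           (density haar_T1 (\<lambda>x. ennreal (\<phi> x)))
           (density haar_T1 (\<lambda>x. ennreal (\<integral>g. \<phi> g \<partial>haar_T1)))
         \<le> \<kappa> * T1_diam L"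
proof -
  interpret prob_space haar_T1
    by (rule prob_space_haar_T1)
  define c where "c = (\<integral>g. \<phi> g \<partial>haar_T1)"
  have "0 < c"
    unfolding c_def using assms(3,4) by (intro expectation_greater) (auto simp: space_haar_T1)
  moreover have "exp (- \<kappa>) * c \<le> c"
    unfolding c_def using assms(3,5) by (intro integral_ge_const AE_I2) (auto simp: space_haar_T1)
  ultimately have "0 \<le> \<kappa>"
    by simp
  have "LP_dist (T1_dist L) (density haar_T1 (\<lambda>x. ennreal (\<phi> x)))
      (density haar_T1 (\<lambda>x. ennreal c)) \<le> \<kappa> * L / 2"
  proof (rule LP_dist_le)
    fix \<epsilon> A assume "\<kappa> * L / 2 < \<epsilon>" "A \<in> sets (density haar_T1 (\<lambda>x. ennreal (\<phi> x)))"
    then show "emeasure (density haar_T1 (\<lambda>x. ennreal (\<phi> x))) A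
        \<le> emeasure (density haar_T1 (\<lambda>x. ennreal c))
            {x \<in> space (density haar_T1 (\<lambda>x. ennreal c)). \<exists>a\<in>A. T1_dist L x a < \<epsilon>}"
      unfolding space_density space_haar_T1 using assms \<open>0 \<le> \<kappa>\<close>
      by (intro emeasure_density_le_neighbourhood) (auto simp: c_def less_imp_le)
  qed (use \<open>0 \<le> \<kappa>\<close> assms(1) in simp)
  then show ?thesis
    using assms(1) by (simp add: T1_diam_eq c_def)
qed

end
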